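(* In the BBoxER framework described in the context, let the seed $\omega$ of the algorithm $a$ be a random variable independent of the dataset draw $\omega_D$, let $b\in\mathbb N$ be a budget and $\epsilon>0$, and assume there is $\delta_{1,\epsilon}$ with $P_{\omega_D}(|\widehat L(x)-L(x)|>\epsilon)\le\delta_{1,\epsilon}$ for every parameter $x$. Then $$P_{\omega,\omega_D}\big(|\widehat L(\widehat x)-L(\widehat x)|>\epsilon\big)\le \Big(\sup_{\omega\ \text{constant}} N(\omega,a,b)\Big)\cdot\delta_{1,\epsilon},$$ where $\widehat x$ depends on both $\omega$ and $\omega_D$ and the supremum is over all fixed values of the seed.
   Context: BBoxER framework. Fix an initial model $m_0$ and a map $(m_0,x)\mapsto \mathrm{modified}(m_0,x)$ sending a parameter $x$ to a model. Let $\mathcal D$ be the class of datasets $D$ of size $s$ drawn from a distribution $F$; $\omega_D$ denotes the randomness of the draw of $D$. A black-box optimization algorithm $a$, deterministic given its seed $\omega$, is run with budget $b$ on $D$: it is initialized from $\omega$; at each iteration $i=1,\dots,b$ it proposes $x_i$ and model $m_i=\mathrm{modified}(m_0,x_i)$, declares a finite number $k_i\ge1$ of possible comparison outcomes, then receives $\mathrm{choice}_i\in\{1,\dots,k_i\}$ computed by comparing $m_1,\dots,m_i$ on $D$; finally it recommends $\widehat x$. The algorithm accesses $D$ only through the $\mathrm{choice}_i$, so $\widehat x$ is a deterministic function of $(\omega,a,b,\mathrm{choice}_1,\dots,\mathrm{choice}_b)$. The internal state is $S(\omega,D,a,b)=(\omega,\mathrm{choice}_1,\dots,\mathrm{choice}_b)$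 and $N(\omega,a,b)=\operatorname{Card}\{S(\omega,D,a,b):D\in\mathcal D\}$. $L(x)$ is the generalization error under $F$ of $\mathrm{modified}(m_0,x)$, $\widehat L(x)$ its empirical error on $D$. *)

theory Defs
  imports "HOL-Probability.Probability"
begin

text \<open>An algorithm is given by three deterministic functions of its seed
  and of the comparison outcomes received so far:
  propose (the next parameter x_i), nout (the number k_i of possible outcomes of the next
  comparison) and recommend (the final recommendation).  The comparison of the models
  m_1,...,m_i on dataset D with k_i declared outcomes is cmp D k_i [m_1,...,m_i].\<close>

fun bbox_run ::
  "('w \<Rightarrow> nat list \<Rightarrow> 'x) \<Rightarrow> ('w \<Rightarrow> nat list \<Rightarrow> nat) \<Rightarrow>
   ('m \<Rightarrow> 'x \<Rightarrow> 'm) \<Rightarrow> 'm \<Rightarrow> ('d \<Rightarrow> nat \<Rightarrow> 'm list \<Rightarrow> nat) \<Rightarrow>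
   'w \<Rightarrow> 'd \<Rightarrow> nat \<Rightarrow> 'x list \<times> nat list" where
  "bbox_run propose nout modified m0 cmp \<omega> D 0 = ([], [])"
| "bbox_run propose nout modified m0 cmp \<omega> D (Suc i) =
     (let (xs, cs) = bbox_run propose nout modified m0 cmp \<omega> D i;
          x = propose \<omega> cs;
          k = nout \<omega> cs;
          c = cmp D k (map (modified m0) (xs @ [x]))
      in (xs @ [x], cs @ [c]))"

definition bbox_choices where
  "bbox_choices propose nout modified m0 cmp \<omega> D b =
     snd (bbox_run propose nout modified m0 cmp \<omega> D b)"

definition bbox_state where
  "bbox_state propose nout modified m0 cmp \<omega> D b =
     (\<omega>, bbox_choices propose nout modified m0 cmp \<omega> D b)"

definition bbox_xhat where
  "bbox_xhat propose nout recommend modified m0 cmp \<omega> D b =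
     recommend \<omega> (bbox_choices propose nout modified m0 cmp \<omega> D b)"

definition bbox_N where
  "bbox_N propose nout modified m0 cmp \<omega> Ds b =
     card ((\<lambda>D. bbox_state propose nout modified m0 cmp \<omega> D b) ` Ds)"

end

theory Submission
  imports Defs
begin

text \<open>For a fixed seed the algorithm sees the dataset only through the comparison outcomes, so
  as the dataset varies its recommendation takes at most N values.  Hence the event that the
  recommendation generalises badly is, for a fixed seed, covered by at most N events of the form
  ``a fixed parameter generalises badly'', each of probability at most \<delta>; the union bound gives
  N \<delta>, and integrating this bound over the independent seed gives the theorem.\<close>

lemma bbox_choices_Suc:
  assumes nout_pos: "\<And>\<omega> cs. nout \<omega> cs \<ge> 1"
    and cmp_range: "\<And>D k ms. k \<ge> 1 \<Longrightarrow> cmp D k ms \<in> {1..k}"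
  shows "\<exists>c\<in>{1..nout \<omega> (bbox_choices propose nout modified m0 cmp \<omega> D i)}.
           bbox_choices propose nout modified m0 cmp \<omega> D (Suc i)
             = bbox_choices propose nout modified m0 cmp \<omega> D i @ [c]"
proof -
  obtain xs cs where run: "bbox_run propose nout modified m0 cmp \<omega> D i = (xs, cs)"
    by fastforce
  then have cs: "bbox_choices propose nout modified m0 cmp \<omega> D i = cs"
    by (simp add: bbox_choices_def)
  let ?c = "cmp D (nout \<omega> cs) (map (modified m0) (xs @ [propose \<omega> cs]))"
  have "bbox_choices propose nout modified m0 cmp \<omega> D (Suc i) = cs @ [?c]"
    using run by (simp add: bbox_choices_def Let_def)
  moreover have "?c \<in> {1..nout \<omega> cs}"
    using cmp_range nout_pos by blast
  ultimately show ?thesis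
    unfolding cs by blast
qed

lemma finite_bbox_choices_image:
  assumes nout_pos: "\<And>\<omega> cs. nout \<omega> cs \<ge> 1"
    and cmp_range: "\<And>D k ms. k \<ge> 1 \<Longrightarrow> cmp D k ms \<in> {1..k}"
  shows "finite ((\<lambda>D. bbox_choices propose nout modified m0 cmp \<omega> D i) ` Ds)"
proof (induction i)
  case 0
  show ?case by (simp add: bbox_choices_def image_constant_conv)
next
  case (Suc i)
  let ?C = "(\<lambda>D. bbox_choices propose nout modified m0 cmp \<omega> D i) ` Ds"
  have "(\<lambda>D. bbox_choices propose nout modified m0 cmp \<omega> D (Suc i)) ` Ds
          \<subseteq> (\<Union>cs\<in>?C. (\<lambda>c. cs @ [c]) ` {1..nout \<omega> cs})"
  proof (rule image_subsetI)
    fix D assume "D \<in> Ds"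
    moreover obtain c where "c \<in> {1..nout \<omega> (bbox_choices propose nout modified m0 cmp \<omega> D i)}"
      and "bbox_choices propose nout modified m0 cmp \<omega> D (Suc i)
             = bbox_choices propose nout modified m0 cmp \<omega> D i @ [c]"
      using bbox_choices_Suc[where nout = nout and cmp = cmp, OF nout_pos cmp_range] by blast
    ultimately show "bbox_choices propose nout modified m0 cmp \<omega> D (Suc i)
                       \<in> (\<Union>cs\<in>?C. (\<lambda>c. cs @ [c]) ` {1..nout \<omega> cs})"
      by (auto intro!: bexI[of _ D])
  qed
  moreover have "finite (\<Union>cs\<in>?C. (\<lambda>c. cs @ [c]) ` {1..nout \<omega> cs})"
    using Suc.IH by (intro finite_UN_I) auto
  ultimately show ?case by (rule finite_subset)
qed

lemma bbox_N_eq_card_choices: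
  "bbox_N propose nout modified m0 cmp \<omega> Ds b
     = card ((\<lambda>D. bbox_choices propose nout modified m0 cmp \<omega> D b) ` Ds)"
proof -
  have "(\<lambda>D. bbox_state propose nout modified m0 cmp \<omega> D b) ` Ds
          = Pair \<omega> ` (\<lambda>D. bbox_choices propose nout modified m0 cmp \<omega> D b) ` Ds"
    by (auto simp: bbox_state_def)
  then show ?thesis
    unfolding bbox_N_def by (simp add: card_image inj_on_def)
qed

lemma emeasure_le_card_cover:
  assumes "finite C" and "A \<subseteq> (\<Union>c\<in>C. B c)"
    and "\<And>c. c \<in> C \<Longrightarrow> B c \<in> sets M" and "\<And>c. c \<in> C \<Longrightarrow> emeasure M (B c) \<le> \<delta>"
  shows "emeasure M A \<le> of_nat (card C) * \<delta>"
proof -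
  have "emeasure M A \<le> emeasure M (\<Union>c\<in>C. B c)"
    using assms(1-3) by (intro emeasure_mono) auto
  also have "\<dots> \<le> (\<Sum>c\<in>C. emeasure M (B c))"
    using assms(1,3) by (intro emeasure_subadditive_finite) auto
  also have "\<dots> \<le> of_nat (card C) * \<delta>"
    using assms(4) by (rule sum_bounded_above)
  finally show ?thesis .
qed

lemma emeasure_bad_bbox_xhat_le:
  assumes "finite_measure M"
    and nout_pos: "\<And>\<omega> cs. nout \<omega> cs \<ge> 1"
    and cmp_range: "\<And>D k ms. k \<ge> 1 \<Longrightarrow> cmp D k ms \<in> {1..k}"
    and bad_sets: "\<And>x. {D \<in> space M. bad D x} \<in> sets M"
    and bad_measure: "\<And>x. measure M {D \<in> space M. bad D x} \<le> \<delta>"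
  shows "emeasure M {D \<in> space M. bad D (bbox_xhat propose nout recommend modified m0 cmp \<omega> D b)}
           \<le> of_nat (bbox_N propose nout modified m0 cmp \<omega> (space M) b) * ennreal \<delta>"
proof -
  interpret finite_measure M by (rule assms(1))
  let ?C = "(\<lambda>D. bbox_choices propose nout modified m0 cmp \<omega> D b) ` space M"
  let ?B = "\<lambda>cs. {D \<in> space M. bad D (recommend \<omega> cs)}"
  have "emeasure M {D \<in> space M. bad D (bbox_xhat propose nout recommend modified m0 cmp \<omega> D b)}
          \<le> of_nat (card ?C) * ennreal \<delta>"
  proof (rule emeasure_le_card_cover)
    show "finite ?C"
      using nout_pos cmp_range by (rule finite_bbox_choices_image)
    show "{D \<in> space M. bad D (bbox_xhat propose nout recommend modified m0 cmp \<omega> D b)}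
            \<subseteq> (\<Union>cs\<in>?C. ?B cs)"
      by (auto simp: bbox_xhat_def)
    show "?B cs \<in> sets M" for cs
      by (rule bad_sets)
    show "emeasure M (?B cs) \<le> ennreal \<delta>" for cs
      using bad_measure by (simp add: emeasure_eq_measure ennreal_leI)
  qed
  then show ?thesis
    by (simp add: bbox_N_eq_card_choices)
qed

lemma emeasure_pair_measure_le_sections:
  assumes "prob_space M" and "sigma_finite_measure N" and "A \<in> sets (M \<Otimes>\<^sub>M N)"
    and "\<And>x. x \<in> space M \<Longrightarrow> emeasure N (Pair x -` A) \<le> c"
  shows "emeasure (M \<Otimes>\<^sub>M N) A \<le> c"
proof -
  interpret M: prob_space M by (rule assms(1))
  interpret N: sigma_finite_measure N by (rule assms(2))
  have "emeasure (M \<Otimes>\<^sub>M N) A = (\<integral>\<^sup>+ x. emeasure N (Pair x -` A) \<partial>M)"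
    using assms(3) by (rule N.emeasure_pair_measure_alt)
  also have "\<dots> \<le> (\<integral>\<^sup>+ x. c \<partial>M)"
    using assms(4) by (intro nn_integral_mono) auto
  also have "\<dots> = c"
    by (simp add: M.emeasure_space_1)
  finally show ?thesis .
qed

theorem theorem3:
  fixes PW :: "'w measure" and PD :: "'d measure"
    and propose :: "'w \<Rightarrow> nat list \<Rightarrow> 'x" and nout :: "'w \<Rightarrow> nat list \<Rightarrow> nat"
    and recommend :: "'w \<Rightarrow> nat list \<Rightarrow> 'x"
    and modified :: "'m \<Rightarrow> 'x \<Rightarrow> 'm" and m0 :: "'m"
    and cmp :: "'d \<Rightarrow> nat \<Rightarrow> 'm list \<Rightarrow> nat"
    and L :: "'m \<Rightarrow> real" and Lhat :: "'d \<Rightarrow> 'm \<Rightarrow> real"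
    and b :: nat and \<epsilon> \<delta> :: real
  assumes PW: "prob_space PW" and PD: "prob_space PD"
    and nout_pos: "\<And>\<omega> cs. nout \<omega> cs \<ge> 1"
    and cmp_range: "\<And>D k ms. k \<ge> 1 \<Longrightarrow> cmp D k ms \<in> {1..k}"
    and eps: "\<epsilon> > 0"
    and meas_x: "\<And>x. {D \<in> space PD. \<bar>Lhat D (modified m0 x) - L (modified m0 x)\<bar> > \<epsilon>} \<in> sets PD"
    and delta1: "\<And>x. measure PD {D \<in> space PD. \<bar>Lhat D (modified m0 x) - L (modified m0 x)\<bar> > \<epsilon>} \<le> \<delta>"
    and meas_joint: "{(\<omega>, D) \<in> space (PW \<Otimes>\<^sub>M PD).
        \<bar>Lhat D (modified m0 (bbox_xhat propose nout recommend modified m0 cmp \<omega> D b))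
          - L (modified m0 (bbox_xhat propose nout recommend modified m0 cmp \<omega> D b))\<bar> > \<epsilon>}
        \<in> sets (PW \<Otimes>\<^sub>M PD)"
  shows "emeasure (PW \<Otimes>\<^sub>M PD) {(\<omega>, D) \<in> space (PW \<Otimes>\<^sub>M PD).
        \<bar>Lhat D (modified m0 (bbox_xhat propose nout recommend modified m0 cmp \<omega> D b))
          - L (modified m0 (bbox_xhat propose nout recommend modified m0 cmp \<omega> D b))\<bar> > \<epsilon>}
      \<le> (SUP \<omega>\<in>space PW. of_nat (bbox_N propose nout modified m0 cmp \<omega> (space PD) b))
         * ennreal \<delta>"
proof -
  define bad where "bad D x \<longleftrightarrow> \<bar>Lhat D (modified m0 x) - L (modified m0 x)\<bar> > \<epsilon>" for D x
  let ?xhat = "\<lambda>\<omega> D. bbox_xhat propose nout recommend modified m0 cmp \<omega> D b"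
  let ?N = "\<lambda>\<omega>. bbox_N propose nout modified m0 cmp \<omega> (space PD) b"
  let ?A = "{(\<omega>, D) \<in> space (PW \<Otimes>\<^sub>M PD). bad D (?xhat \<omega> D)}"
  have "emeasure (PW \<Otimes>\<^sub>M PD) ?A \<le> (SUP \<omega>\<in>space PW. of_nat (?N \<omega>)) * ennreal \<delta>"
  proof (rule emeasure_pair_measure_le_sections)
    show "prob_space PW"
      by (rule PW)
    show "sigma_finite_measure PD"
      using PD by (rule prob_space_imp_sigma_finite)
    show "?A \<in> sets (PW \<Otimes>\<^sub>M PD)"
      using meas_joint unfolding bad_def .
    fix \<omega> assume \<omega>: "\<omega> \<in> space PW"
    have "Pair \<omega> -` ?A = {D \<in> space PD. bad D (?xhat \<omega> D)}"
      using \<omega> by (auto simp: space_pair_measure)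
    also have "emeasure PD \<dots> \<le> of_nat (?N \<omega>) * ennreal \<delta>"
      using prob_space.finite_measure[OF PD] nout_pos cmp_range
      by (rule emeasure_bad_bbox_xhat_le[where bad = bad])
        (use meas_x delta1 in \<open>simp_all add: bad_def\<close>)
    also have "\<dots> \<le> (SUP \<omega>\<in>space PW. of_nat (?N \<omega>)) * ennreal \<delta>"
      using \<omega> by (intro mult_right_mono SUP_upper) auto
    finally show "emeasure PD (Pair \<omega> -` ?A) \<le> \<dots>" .
  qed
  then show ?thesis
    unfolding bad_def .
qed

end
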